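(* Let $\Omega=(a_1,b_1)\times(a_2,b_2)\times\cdots\times(a_d,b_d)\subset\mathbb{R}^d$ with $0\in\Omega$, and put $\underline\hbar=\min\{|a_1|,|b_1|,\dots,|a_d|,|b_d|\}$, $\overline\hbar=\max\{|a_1|,|b_1|,\dots,|a_d|,|b_d|\}$. Then for all $u\in H^1(\Omega)$, $$\|\gamma u\|_{L^2(\partial\Omega)}\le\sqrt{\frac{d+\overline\hbar^2}{\underline\hbar}}\,\|u\|_{H^1(\Omega)},$$ where $\gamma$ denotes the trace operator.
   Context: $\|u\|_{H^1(\Omega)}=\big(\|\nabla u\|^2_{L^2(\Omega)}+\|u\|^2_{L^2(\Omega)}\big)^{1/2}$. *)

theory Defs
  imports "HOL-Analysis.Analysis"
begin

definition partial :: "'n::finite \<Rightarrow> (real^'n \<Rightarrow> real) \<Rightarrow> real^'n \<Rightarrow> real" where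
  "partial i f x = deriv (\<lambda>t. f (x + t *\<^sub>R axis i 1)) 0"

fun partials :: "'n::finite list \<Rightarrow> (real^'n \<Rightarrow> real) \<Rightarrow> real^'n \<Rightarrow> real" where
  "partials [] f = f"
| "partials (i # is) f = partial i (partials is f)"

definition smooth_fun :: "(real^'n::finite \<Rightarrow> real) \<Rightarrow> bool" where
  "smooth_fun f \<longleftrightarrow> (\<forall>is. continuous_on UNIV (partials is f) \<and>
      (\<forall>i x. (\<lambda>t. partials is f (x + t *\<^sub>R axis i 1)) differentiable (at 0)))"

definition test_fun :: "(real^'n::finite) set \<Rightarrow> (real^'n \<Rightarrow> real) \<Rightarrow> bool" where
  "test_fun \<Omega> \<phi> \<longleftrightarrow> smooth_fun \<phi> \<and> compact (closure {x. \<phi> x \<noteq> 0})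
      \<and> closure {x. \<phi> x \<noteq> 0} \<subseteq> \<Omega>"

definition L2_on :: "(real^'n::finite) set \<Rightarrow> (real^'n \<Rightarrow> real) \<Rightarrow> bool" where
  "L2_on \<Omega> u \<longleftrightarrow> u \<in> borel_measurable (lebesgue_on \<Omega>) \<and> set_integrable lebesgue \<Omega> (\<lambda>x. (u x)^2)"

definition weak_grad :: "(real^'n::finite) set \<Rightarrow> (real^'n \<Rightarrow> real) \<Rightarrow> ('n \<Rightarrow> real^'n \<Rightarrow> real) \<Rightarrow> bool" where
  "weak_grad \<Omega> u G \<longleftrightarrow> (\<forall>i. L2_on \<Omega> (G i) \<and>
     (\<forall>\<phi>. test_fun \<Omega> \<phi> \<longrightarrow>
        (LINT x:\<Omega>|lebesgue. u x * partial i \<phi> x) = - (LINT x:\<Omega>|lebesgue. G i x * \<phi> x)))"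

definition H1 :: "(real^'n::finite) set \<Rightarrow> (real^'n \<Rightarrow> real) \<Rightarrow> ('n \<Rightarrow> real^'n \<Rightarrow> real) \<Rightarrow> bool" where
  "H1 \<Omega> u G \<longleftrightarrow> L2_on \<Omega> u \<and> weak_grad \<Omega> u G"

definition h1_norm :: "(real^'n::finite) set \<Rightarrow> (real^'n \<Rightarrow> real) \<Rightarrow> ('n \<Rightarrow> real^'n \<Rightarrow> real) \<Rightarrow> real" where
  "h1_norm \<Omega> u G = sqrt ((LINT x:\<Omega>|lebesgue. (\<Sum>i\<in>UNIV. (G i x)^2)) + (LINT x:\<Omega>|lebesgue. (u x)^2))"

section \<open>Boundary of the box and L2 on the boundary (surface measure = (d-1)-dim Lebesgue on faces)\<close>

definition face_pt :: "'n::finite \<Rightarrow> real \<Rightarrow> ('n \<Rightarrow> real) \<Rightarrow> real^'n" where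
  "face_pt i c y = (\<chi> j. if j = i then c else y j)"

definition face_box :: "real^'n::finite \<Rightarrow> real^'n \<Rightarrow> 'n \<Rightarrow> ('n \<Rightarrow> real) set" where
  "face_box a b i = PiE (UNIV - {i}) (\<lambda>j. {a$j<..<b$j})"

definition face_measure :: "'n::finite \<Rightarrow> ('n \<Rightarrow> real) measure" where
  "face_measure i = PiM (UNIV - {i}) (\<lambda>_. lborel)"

definition bdry_L2 :: "real^'n::finite \<Rightarrow> real^'n \<Rightarrow> (real^'n \<Rightarrow> real) \<Rightarrow> bool" where
  "bdry_L2 a b g \<longleftrightarrow> (\<forall>i. \<forall>c\<in>{a$i, b$i}.
      (\<lambda>y. g (face_pt i c y)) \<in> borel_measurable (face_measure i) \<and>
      set_integrable (face_measure i) (face_box a b i) (\<lambda>y. (g (face_pt i c y))^2))"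

definition bdry_sq_norm :: "real^'n::finite \<Rightarrow> real^'n \<Rightarrow> (real^'n \<Rightarrow> real) \<Rightarrow> real" where
  "bdry_sq_norm a b g = (\<Sum>i\<in>UNIV.
      (LINT y:face_box a b i|face_measure i. (g (face_pt i (a$i) y))^2)
    + (LINT y:face_box a b i|face_measure i. (g (face_pt i (b$i) y))^2))"

section \<open>Trace: L2(boundary)-limit of boundary values of smooth functions converging in H1\<close>

definition is_trace :: "real^'n::finite \<Rightarrow> real^'n \<Rightarrow> (real^'n \<Rightarrow> real) \<Rightarrow> ('n \<Rightarrow> real^'n \<Rightarrow> real)
     \<Rightarrow> (real^'n \<Rightarrow> real) \<Rightarrow> bool" where
  "is_trace a b u G tr \<longleftrightarrow> bdry_L2 a b tr \<and>
     (\<exists>v::nat \<Rightarrow> real^'n \<Rightarrow> real. (\<forall>n. smooth_fun (v n)) \<and>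
        (\<lambda>n. h1_norm (box a b) (\<lambda>x. v n x - u x) (\<lambda>i x. partial i (v n) x - G i x)) \<longlonglongrightarrow> 0 \<and>
        (\<lambda>n. sqrt (bdry_sq_norm a b (\<lambda>x. v n x - tr x))) \<longlonglongrightarrow> 0)"

definition hbar_lo :: "real^'n::finite \<Rightarrow> real^'n \<Rightarrow> real" where
  "hbar_lo a b = Min (range (\<lambda>i. min \<bar>a$i\<bar> \<bar>b$i\<bar>))"

definition hbar_hi :: "real^'n::finite \<Rightarrow> real^'n \<Rightarrow> real" where
  "hbar_hi a b = Max (range (\<lambda>i. max \<bar>a$i\<bar> \<bar>b$i\<bar>))"

end

theory Submission
  imports Defs
begin

text \<open>
  For a smooth \<open>v\<close>, integrate \<open>(t v\<^sup>2)' = v\<^sup>2 + 2 t v \<partial>\<^sub>i v\<close> along every segment of the box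
  parallel to the \<open>i\<close>-th axis. Since \<open>0\<close> lies in the box, the endpoint weights \<open>|t|\<close> are at
  least \<open>hbar_lo\<close>, and the cross term is absorbed by Young's inequality using \<open>|t| \<le> hbar_hi\<close>,
  with weight \<open>hbar_hi\<^sup>2 / d\<close>. Integrating over the faces and summing over the \<open>d\<close> directions
  bounds \<open>hbar_lo\<close> times the squared boundary norm of \<open>v\<close> by \<open>d + hbar_hi\<^sup>2\<close> times its
  squared \<open>H\<^sup>1\<close> norm. The trace is a limit of boundary values of smooth functions converging
  in \<open>H\<^sup>1\<close>, and both sides are seminorms, so the inequality passes to the limit.
\<close>


section \<open>Weighted squares and the triangle inequality\<close>

lemma two_mult_le_scaled_squares:
  fixes p q s :: real
  assumes "s > 0"
  shows "2 * p * q \<le> s * p^2 + q^2 / s"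
proof -
  have "0 \<le> (s * p - q)^2 / s" using assms by simp
  also have "\<dots> = s * p^2 + q^2 / s - 2 * p * q"
    using assms by (simp add: power2_eq_square field_simps)
  finally show ?thesis by simp
qed

lemma sq_add_le_weighted:
  fixes p q e :: real
  assumes "e > 0"
  shows "(p + q)^2 \<le> (1 + e) * p^2 + (1 + 1/e) * q^2"
  using two_mult_le_scaled_squares[OF assms, of p q]
  by (simp add: power2_sum algebra_simps)

lemma sqrt_le_add_sqrt_if_weighted_bound:
  fixes x y z :: real
  assumes bound: "\<And>e. e > 0 \<Longrightarrow> x \<le> (1 + e) * y + (1 + 1/e) * z"
    and "0 \<le> y" "0 \<le> z"
  shows "sqrt x \<le> sqrt y + sqrt z"
proof -
  have "x \<le> (sqrt y + sqrt z)^2"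
  proof (cases "y = 0 \<or> z = 0")
    case True
    have "x \<le> y + z + \<delta>" if "\<delta> > 0" for \<delta>
      using True
    proof (elim disjE)
      assume "y = 0"
      have "z * (\<delta> / (z + 1)) \<le> \<delta>"
        using \<open>0 \<le> z\<close> \<open>\<delta> > 0\<close> by (simp add: field_simps)
      thus ?thesis using bound[of "(z + 1) / \<delta>"] \<open>y = 0\<close> \<open>0 \<le> z\<close> \<open>\<delta> > 0\<close>
        by (simp add: algebra_simps)
    next
      assume "z = 0"
      have "y * (\<delta> / (y + 1)) \<le> \<delta>"
        using \<open>0 \<le> y\<close> \<open>\<delta> > 0\<close> by (simp add: field_simps)
      thus ?thesis using bound[of "\<delta> / (y + 1)"] \<open>z = 0\<close> \<open>0 \<le> y\<close> \<open>\<delta> > 0\<close>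
        by (simp add: algebra_simps)
    qed
    hence "x \<le> y + z" by (rule field_le_epsilon)
    thus ?thesis using True assms(2,3) by auto
  next
    case False
    hence pos: "sqrt y > 0" "sqrt z > 0" using assms(2,3) by auto
    have "x \<le> (1 + sqrt z / sqrt y) * y + (1 + 1 / (sqrt z / sqrt y)) * z"
      using bound[of "sqrt z / sqrt y"] pos by simp
    also have "\<dots> = (sqrt y + sqrt z)^2"
      using pos assms(2,3) by (simp add: field_simps power2_eq_square)
    finally show ?thesis .
  qed
  hence "sqrt x \<le> \<bar>sqrt y + sqrt z\<bar>" by (metis real_sqrt_abs real_sqrt_le_mono)
  thus ?thesis using assms(2,3) by simp
qed

lemma integrable_sq_diff:
  fixes f g :: "'a \<Rightarrow> real"
  assumes "f \<in> borel_measurable M" "g \<in> borel_measurable M"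
    and "integrable M (\<lambda>x. (f x)^2)" "integrable M (\<lambda>x. (g x)^2)"
  shows "integrable M (\<lambda>x. (f x - g x)^2)"
proof (rule Bochner_Integration.integrable_bound)
  show "integrable M (\<lambda>x. 2 * (f x)^2 + 2 * (g x)^2)" using assms(3,4) by simp
  show "AE x in M. norm ((f x - g x)^2) \<le> norm (2 * (f x)^2 + 2 * (g x)^2)"
    using sq_add_le_weighted[of 1 "f x" "- g x" for x] by simp
qed (use assms(1,2) in measurable)

lemma integral_sq_le_weighted:
  fixes f g :: "'a \<Rightarrow> real"
  assumes "f \<in> borel_measurable M" "g \<in> borel_measurable M"
    and "integrable M (\<lambda>x. (f x)^2)" "integrable M (\<lambda>x. (g x)^2)" and "e > 0"
  shows "(\<integral>x. (f x)^2 \<partial>M) \<le> (1 + e) * (\<integral>x. (g x)^2 \<partial>M) + (1 + 1/e) * (\<integral>x. (f x - g x)^2 \<partial>M)"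
proof -
  have diff: "integrable M (\<lambda>x. (f x - g x)^2)" by (rule integrable_sq_diff[OF assms(1-4)])
  have "(\<integral>x. (f x)^2 \<partial>M) \<le> (\<integral>x. (1 + e) * (g x)^2 + (1 + 1/e) * (f x - g x)^2 \<partial>M)"
    using assms(3,4) diff sq_add_le_weighted[OF \<open>e > 0\<close>, of "g x" "f x - g x" for x]
    by (intro integral_mono) auto
  also have "\<dots> = (1 + e) * (\<integral>x. (g x)^2 \<partial>M) + (1 + 1/e) * (\<integral>x. (f x - g x)^2 \<partial>M)"
    using assms(4) diff by simp
  finally show ?thesis .
qed

lemma set_integral_sq_le_weighted:
  fixes f g :: "'a \<Rightarrow> real"
  assumes A: "A \<in> sets M"
    and "f \<in> borel_measurable (restrict_space M A)" "g \<in> borel_measurable (restrict_space M A)"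
    and "set_integrable M A (\<lambda>x. (f x)^2)" "set_integrable M A (\<lambda>x. (g x)^2)"
  shows "set_integrable M A (\<lambda>x. (f x - g x)^2)"
    and "e > 0 \<Longrightarrow> (LINT x:A|M. (f x)^2)
      \<le> (1 + e) * (LINT x:A|M. (g x)^2) + (1 + 1/e) * (LINT x:A|M. (f x - g x)^2)"
proof -
  have A': "A \<inter> space M \<in> sets M" using A by simp
  have set_integrable_iff: "set_integrable M A h \<longleftrightarrow> integrable (restrict_space M A) h" for h :: "'a \<Rightarrow> real"
    unfolding set_integrable_def integrable_restrict_space[OF A'] ..
  have set_integral_eq: "(LINT x:A|M. h x) = (\<integral>x. h x \<partial>restrict_space M A)" for h :: "'a \<Rightarrow> real"
    unfolding set_lebesgue_integral_def integral_restrict_space[OF A'] ..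
  show "set_integrable M A (\<lambda>x. (f x - g x)^2)"
    using assms unfolding set_integrable_iff by (intro integrable_sq_diff)
  show "e > 0 \<Longrightarrow> (LINT x:A|M. (f x)^2)
      \<le> (1 + e) * (LINT x:A|M. (g x)^2) + (1 + 1/e) * (LINT x:A|M. (f x - g x)^2)"
    using assms unfolding set_integrable_iff set_integral_eq by (intro integral_sq_le_weighted)
qed

lemma set_integral_sq_nonneg: "0 \<le> (LINT x:A|M. (f x :: real)^2)"
  unfolding set_lebesgue_integral_def by (simp add: Bochner_Integration.integral_nonneg)

lemma nn_integral_indicator_eq_set_integral:
  fixes f :: "'a \<Rightarrow> real"
  assumes "set_integrable M A f" "\<And>x. x \<in> A \<Longrightarrow> 0 \<le> f x"
  shows "(\<integral>\<^sup>+x. ennreal (indicator A x * f x) \<partial>M) = ennreal (LINT x:A|M. f x)"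
proof -
  have "integrable M (\<lambda>x. indicator A x * f x)"
    using assms(1) by (simp add: set_integrable_def)
  moreover have "AE x in M. 0 \<le> indicator A x * f x"
    using assms(2) by (simp add: indicator_def)
  ultimately show ?thesis
    unfolding set_lebesgue_integral_def by (simp add: nn_integral_eq_integral)
qed

section \<open>Faces of a box\<close>

lemma measurable_vec_lambda [measurable]:
  "(\<lambda>f. (\<chi> j. f j) :: real^'n::finite) \<in> borel_measurable (PiM UNIV (\<lambda>_. lborel))"
  by (subst borel_measurable_euclidean_space) (auto simp: Basis_vec_def inner_axis)

lemma lborel_eq_distr_vec_lambda:
  "(lborel :: (real^'n::finite) measure) = distr (PiM UNIV (\<lambda>_. lborel)) borel (\<lambda>f. \<chi> j. f j)"
proof (rule lborel_eqI)
  interpret product_sigma_finite "\<lambda>_::'n. lborel::real measure" by standard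
  fix l u :: "real^'n"
  assume le: "\<And>b. b \<in> Basis \<Longrightarrow> l \<bullet> b \<le> u \<bullet> b"
  have le': "l $ j \<le> u $ j" for j using le[of "axis j 1"] by (auto simp: Basis_vec_def inner_axis)
  have vimage: "(\<lambda>f. \<chi> j. f j) -` box l u \<inter> space (PiM UNIV (\<lambda>_. lborel)) = PiE UNIV (\<lambda>j. {l$j<..<u$j})"
    by (auto simp: space_PiM mem_box_cart PiE_def extensional_def Pi_iff)
  have "emeasure (distr (PiM UNIV (\<lambda>_. lborel)) borel (\<lambda>f. \<chi> j. f j)) (box l u)
      = emeasure (PiM UNIV (\<lambda>_. lborel)) (PiE UNIV (\<lambda>j. {l$j<..<u$j}))"
    by (subst emeasure_distr) (auto simp: vimage)
  also have "\<dots> = ennreal (\<Prod>j\<in>UNIV. u$j - l$j)"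
    by (subst emeasure_PiM) (auto simp: le' prod_ennreal)
  also have "(\<Prod>j\<in>UNIV. u$j - l$j) = (\<Prod>b\<in>Basis. (u - l) \<bullet> b)"
  proof -
    have Basis: "Basis = (\<lambda>j. axis j (1::real)) ` (UNIV::'n set)" by (auto simp: Basis_vec_def)
    have "inj (\<lambda>j. axis j (1::real) :: real^'n)" by (auto simp: inj_def axis_eq_axis)
    thus ?thesis unfolding Basis by (simp add: prod.reindex inner_axis o_def)
  qed
  finally show "emeasure (distr (PiM UNIV (\<lambda>_. lborel)) borel (\<lambda>f. \<chi> j. f j)) (box l u)
      = (\<Prod>b\<in>Basis. (u - l) \<bullet> b)"
    using le by (simp add: prod_nonneg)
qed simp

lemma measurable_face_pt [measurable]: "face_pt i c \<in> borel_measurable (face_measure i)"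
  unfolding face_measure_def
  apply (subst borel_measurable_euclidean_space)
  apply (clarsimp simp: Basis_vec_def inner_axis face_pt_def)
  subgoal for j by (cases "j = i") (auto intro: measurable_component_singleton)
  done

lemma nn_integral_lborel_eq_face_iterated:
  fixes g :: "real^'n::finite \<Rightarrow> ennreal"
  assumes [measurable]: "g \<in> borel_measurable borel"
  shows "(\<integral>\<^sup>+x. g x \<partial>lborel) = (\<integral>\<^sup>+y. (\<integral>\<^sup>+t. g (face_pt i t y) \<partial>lborel) \<partial>face_measure i)"
proof -
  interpret product_sigma_finite "\<lambda>_::'n. lborel::real measure" by standard
  have UNIV_eq: "insert i (UNIV - {i}) = UNIV" by auto
  have "(\<integral>\<^sup>+x. g x \<partial>lborel) = (\<integral>\<^sup>+f. g (\<chi> j. f j) \<partial>PiM (insert i (UNIV - {i})) (\<lambda>_. lborel))"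
    by (subst lborel_eq_distr_vec_lambda) (simp add: nn_integral_distr UNIV_eq)
  also have "\<dots> = (\<integral>\<^sup>+y. (\<integral>\<^sup>+t. g (\<chi> j. (y(i:=t)) j) \<partial>lborel) \<partial>PiM (UNIV - {i}) (\<lambda>_. lborel))"
    by (rule product_nn_integral_insert) (auto simp: UNIV_eq)
  also have "\<dots> = (\<integral>\<^sup>+y. (\<integral>\<^sup>+t. g (face_pt i t y) \<partial>lborel) \<partial>face_measure i)"
    unfolding face_measure_def face_pt_def by (simp add: fun_upd_def)
  finally show ?thesis .
qed

lemma face_pt_add_axis: "face_pt i t y + s *\<^sub>R axis i 1 = face_pt i (s + t) y"
  by (simp add: vec_eq_iff face_pt_def axis_def)

lemma continuous_on_face_pt [continuous_intros]: "continuous_on S (\<lambda>t. face_pt i t y)"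
proof -
  have eq: "(\<lambda>t. face_pt i t y) = (\<lambda>t. face_pt i 0 y + t *\<^sub>R axis i 1)"
    using face_pt_add_axis[of i 0 y] by simp
  show ?thesis by (subst eq) (intro continuous_intros)
qed

lemma mem_box_face_pt:
  "face_pt i t y \<in> box a b \<longleftrightarrow> a$i < t \<and> t < b$i \<and> (\<forall>j. j \<noteq> i \<longrightarrow> a$j < y j \<and> y j < b$j)"
  by (auto simp: mem_box_cart face_pt_def)

lemma mem_face_box:
  assumes "y \<in> space (face_measure i)"
  shows "y \<in> face_box a b i \<longleftrightarrow> (\<forall>j. j \<noteq> i \<longrightarrow> a$j < y j \<and> y j < b$j)"
  using assms by (auto simp: face_box_def face_measure_def space_PiM PiE_def Pi_iff)

lemma sets_face_box [measurable]: "face_box a b i \<in> sets (face_measure i)"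
  unfolding face_box_def face_measure_def by (rule sets_PiM_I_finite) auto

lemma emeasure_face_box_finite: "emeasure (face_measure i) (face_box a b i) < \<infinity>"
proof -
  interpret product_sigma_finite "\<lambda>_::'a. lborel::real measure" by standard
  show ?thesis
    unfolding face_box_def face_measure_def
    using emeasure_lborel_box_finite[where 'a=real]
    by (subst emeasure_PiM) (auto simp: box_real less_top[symmetric] ennreal_prod_eq_top)
qed

lemma set_integrable_face_continuous:
  fixes g :: "real^'n::finite \<Rightarrow> real"
  assumes g: "continuous_on UNIV g" and c: "a$i \<le> c" "c \<le> b$i"
  shows "set_integrable (face_measure i) (face_box a b i) (\<lambda>y. g (face_pt i c y))"
proof -
  have "compact (g ` cbox a b)" by (intro compact_continuous_image continuous_on_subset[OF g]) auto
  then obtain B where B: "\<And>x. x \<in> cbox a b \<Longrightarrow> norm (g x) \<le> B"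
    by (meson bounded_iff compact_imp_bounded image_eqI)
  have [measurable]: "g \<in> borel_measurable borel" using g by (rule borel_measurable_continuous_onI)
  have "face_pt i c y \<in> cbox a b" if "y \<in> face_box a b i" for y
    using that c by (auto simp: face_box_def mem_box_cart face_pt_def PiE_def Pi_iff less_imp_le)
  thus ?thesis
    unfolding set_integrable_def using emeasure_face_box_finite B
    by (intro integrableI_bounded_set_indicator[where B=B]) auto
qed

lemma set_integrable_box_continuous:
  fixes g :: "real^'n::finite \<Rightarrow> real"
  assumes g: "continuous_on UNIV g"
  shows "set_integrable lebesgue (box a b) g"
proof -
  have [measurable]: "g \<in> borel_measurable borel" using g by (rule borel_measurable_continuous_onI)
  have "integrable lborel (\<lambda>x. indicator (box a b) x *\<^sub>R (indicator (cbox a b) x *\<^sub>R g x))"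
    by (intro integrable_mult_indicator borel_integrable_compact continuous_on_subset[OF g]) auto
  moreover have "(\<lambda>x. indicator (box a b) x *\<^sub>R (indicator (cbox a b) x *\<^sub>R g x))
      = (\<lambda>x. indicator (box a b) x *\<^sub>R g x)"
    using box_subset_cbox[of a b] by (auto simp: fun_eq_iff split: split_indicator)
  ultimately show ?thesis
    unfolding set_integrable_def by (subst integrable_completion) auto
qed

section \<open>The trace inequality for smooth functions\<close>

lemma endpoint_sq_le_weighted_integral:
  fixes \<phi> \<phi>' :: "real \<Rightarrow> real" and a b L H s :: real
  assumes ab: "a < 0" "0 < b"
    and deriv: "\<And>t. (\<phi> has_real_derivative \<phi>' t) (at t)"
    and cont: "continuous_on {a..b} \<phi>'"
    and L: "L \<le> -a" "L \<le> b" and H: "-a \<le> H" "b \<le> H" and s: "s > 0"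
  obtains I where "((\<lambda>t. (1 + s) * (\<phi> t)^2 + H^2 / s * (\<phi>' t)^2) has_integral I) {a<..<b}"
    and "L * ((\<phi> a)^2 + (\<phi> b)^2) \<le> I"
proof -
  let ?\<psi> = "\<lambda>t. (1 + s) * (\<phi> t)^2 + H^2 / s * (\<phi>' t)^2"
  let ?F = "\<lambda>t. t * (\<phi> t)^2"
  let ?F' = "\<lambda>t. (\<phi> t)^2 + 2 * t * \<phi> t * \<phi>' t"
  have "(?F has_real_derivative ?F' t) (at t)" for t
    using deriv[of t] by (auto intro!: derivative_eq_intros simp: power2_eq_square algebra_simps)
  hence "(?F' has_integral ?F b - ?F a) {a..b}"
    using ab by (intro fundamental_theorem_of_calculus)
      (auto simp: has_real_derivative_iff_has_vector_derivative[symmetric] intro: has_field_derivative_at_within)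
  moreover have "continuous_on {a..b} \<phi>"
    using deriv by (meson DERIV_isCont continuous_at_imp_continuous_on)
  hence "?\<psi> integrable_on {a..b}"
    by (intro integrable_continuous_real continuous_intros cont)
  then obtain I where I: "(?\<psi> has_integral I) {a..b}" by blast
  moreover have "?F' t \<le> ?\<psi> t" if "t \<in> {a..b}" for t
  proof -
    have "t^2 \<le> H^2"
      using that H by (intro abs_le_square_iff[THEN iffD1]) auto
    hence sq_le: "(t * \<phi>' t)^2 \<le> H^2 * (\<phi>' t)^2"
      by (simp add: power_mult_distrib mult_right_mono)
    have "2 * t * \<phi> t * \<phi>' t = 2 * \<phi> t * (t * \<phi>' t)" by simp
    also have "\<dots> \<le> s * (\<phi> t)^2 + (t * \<phi>' t)^2 / s"
      by (rule two_mult_le_scaled_squares[OF s])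
    also have "\<dots> \<le> s * (\<phi> t)^2 + H^2 * (\<phi>' t)^2 / s"
      using sq_le s by (simp add: divide_right_mono)
    finally show ?thesis by (simp add: algebra_simps)
  qed
  ultimately have "?F b - ?F a \<le> I" by (rule has_integral_le)
  moreover have "L * ((\<phi> a)^2 + (\<phi> b)^2) \<le> ?F b - ?F a"
    using mult_right_mono[OF L(1), of "(\<phi> a)^2"] mult_right_mono[OF L(2), of "(\<phi> b)^2"]
    by (simp add: algebra_simps)
  ultimately show ?thesis using I that by (auto simp: has_integral_Icc_iff_Ioo)
qed

lemma smooth_fun_continuous: "smooth_fun v \<Longrightarrow> continuous_on UNIV v"
  unfolding smooth_fun_def by (metis partials.simps(1))

lemma smooth_fun_continuous_partial: "smooth_fun v \<Longrightarrow> continuous_on UNIV (partial i v)"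
  unfolding smooth_fun_def by (metis partials.simps)

lemma smooth_fun_has_real_derivative_face_pt:
  assumes "smooth_fun v"
  shows "((\<lambda>t. v (face_pt i t y)) has_real_derivative partial i v (face_pt i t y)) (at t)"
proof -
  let ?x = "face_pt i t y"
  have "(\<lambda>s. v (?x + s *\<^sub>R axis i 1)) differentiable (at 0)"
    using assms unfolding smooth_fun_def by (metis partials.simps(1))
  hence "((\<lambda>s. v (?x + s *\<^sub>R axis i 1)) has_real_derivative partial i v ?x) (at 0)"
    unfolding partial_def by (simp add: DERIV_deriv_iff_real_differentiable)
  hence "((\<lambda>s. v (face_pt i (s + t) y)) has_real_derivative partial i v ?x) (at 0)"
    by (simp add: face_pt_add_axis)
  thus ?thesis using DERIV_shift[of "\<lambda>t. v (face_pt i t y)" _ 0 t] by simp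
qed

lemma face_line_endpoint_bound:
  assumes ab: "a$i < 0" "0 < b$i" and L: "L \<le> -a$i" "L \<le> b$i" and H: "-a$i \<le> H" "b$i \<le> H"
    and s: "s > 0" and v: "smooth_fun v" and y: "y \<in> space (face_measure i)"
  shows "ennreal (indicator (face_box a b i) y * (L * ((v (face_pt i (a$i) y))^2 + (v (face_pt i (b$i) y))^2)))
    \<le> (\<integral>\<^sup>+t. ennreal (indicator (box a b) (face_pt i t y)
          * ((1 + s) * (v (face_pt i t y))^2 + H^2 / s * (partial i v (face_pt i t y))^2)) \<partial>lborel)"
proof (cases "y \<in> face_box a b i")
  case True
  have "continuous_on {a$i..b$i} (\<lambda>t. partial i v (face_pt i t y))"
    by (rule continuous_on_compose2[OF smooth_fun_continuous_partial[OF v] continuous_on_face_pt]) auto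
  then obtain I
    where I: "((\<lambda>t. (1 + s) * (v (face_pt i t y))^2 + H^2 / s * (partial i v (face_pt i t y))^2)
               has_integral I) {a$i<..<b$i}"
      and le_I: "L * ((v (face_pt i (a$i) y))^2 + (v (face_pt i (b$i) y))^2) \<le> I"
    by (rule endpoint_sq_le_weighted_integral[OF ab smooth_fun_has_real_derivative_face_pt[OF v] _ L H s])
  have "indicator (box a b) (face_pt i t y) = (indicator {a$i<..<b$i} t :: real)" for t
    using True mem_face_box[OF y] by (auto simp: mem_box_face_pt split: split_indicator)
  hence "(\<integral>\<^sup>+t. ennreal (indicator (box a b) (face_pt i t y)
          * ((1 + s) * (v (face_pt i t y))^2 + H^2 / s * (partial i v (face_pt i t y))^2)) \<partial>lborel)
      = (\<integral>\<^sup>+t. ennreal ((1 + s) * (v (face_pt i t y))^2 + H^2 / s * (partial i v (face_pt i t y))^2)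
          * indicator {a$i<..<b$i} t \<partial>lborel)"
    by (intro nn_integral_cong) (simp split: split_indicator)
  also have "\<dots> = ennreal I"
    using s by (intro nn_integral_has_integral_lebesgue'[OF _ I]) auto
  finally show ?thesis using True le_I by (simp add: ennreal_leI)
qed simp

lemma opposite_faces_set_integral_le:
  fixes v :: "real^'n::finite \<Rightarrow> real"
  assumes ab: "a$i < 0" "0 < b$i" and L: "0 \<le> L" "L \<le> -a$i" "L \<le> b$i" and H: "-a$i \<le> H" "b$i \<le> H"
    and s: "s > 0" and v: "smooth_fun v"
  shows "L * ((LINT y:face_box a b i|face_measure i. (v (face_pt i (a$i) y))^2)
              + (LINT y:face_box a b i|face_measure i. (v (face_pt i (b$i) y))^2))
    \<le> (1 + s) * (LINT x:box a b|lebesgue. (v x)^2) + H^2 / s * (LINT x:box a b|lebesgue. (partial i v x)^2)"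
proof -
  define \<phi> where "\<phi> y = L * ((v (face_pt i (a$i) y))^2 + (v (face_pt i (b$i) y))^2)" for y
  define \<psi> where "\<psi> x = (1 + s) * (v x)^2 + H^2 / s * (partial i v x)^2" for x
  have cont_v2: "continuous_on UNIV (\<lambda>x. (v x)^2)"
    by (intro continuous_intros smooth_fun_continuous[OF v])
  have cont_p2: "continuous_on UNIV (\<lambda>x. (partial i v x)^2)"
    by (intro continuous_intros smooth_fun_continuous_partial[OF v])
  have [measurable]: "\<psi> \<in> borel_measurable borel"
    unfolding \<psi>_def by (intro borel_measurable_continuous_onI continuous_intros cont_v2 cont_p2)
  have int_a: "set_integrable (face_measure i) (face_box a b i) (\<lambda>y. (v (face_pt i (a$i) y))^2)"
    and int_b: "set_integrable (face_measure i) (face_box a b i) (\<lambda>y. (v (face_pt i (b$i) y))^2)"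
    using ab by (auto intro!: set_integrable_face_continuous[OF cont_v2])
  have int_v: "set_integrable lebesgue (box a b) (\<lambda>x. (v x)^2)"
    and int_p: "set_integrable lebesgue (box a b) (\<lambda>x. (partial i v x)^2)"
    by (intro set_integrable_box_continuous cont_v2 cont_p2)+
  have "ennreal (LINT y:face_box a b i|face_measure i. \<phi> y)
      = (\<integral>\<^sup>+y. ennreal (indicator (face_box a b i) y * \<phi> y) \<partial>face_measure i)"
    unfolding \<phi>_def using int_a int_b L
    by (intro nn_integral_indicator_eq_set_integral[symmetric]) auto
  also have "\<dots> \<le> (\<integral>\<^sup>+y. (\<integral>\<^sup>+t. ennreal (indicator (box a b) (face_pt i t y) * \<psi> (face_pt i t y))
      \<partial>lborel) \<partial>face_measure i)"
    unfolding \<phi>_def \<psi>_def by (intro nn_integral_mono face_line_endpoint_bound ab L H s v) auto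
  also have "\<dots> = (\<integral>\<^sup>+x. ennreal (indicator (box a b) x * \<psi> x) \<partial>lborel)"
    by (rule nn_integral_lborel_eq_face_iterated[symmetric]) measurable
  also have "\<dots> = (\<integral>\<^sup>+x. ennreal (indicator (box a b) x * \<psi> x) \<partial>lebesgue)"
    by (simp add: nn_integral_completion)
  also have "\<dots> = ennreal (LINT x:box a b|lebesgue. \<psi> x)"
    unfolding \<psi>_def using int_v int_p s by (intro nn_integral_indicator_eq_set_integral) auto
  finally have "ennreal (LINT y:face_box a b i|face_measure i. \<phi> y) \<le> ennreal (LINT x:box a b|lebesgue. \<psi> x)" .
  moreover have "0 \<le> (LINT x:box a b|lebesgue. \<psi> x)"
    unfolding set_lebesgue_integral_def \<psi>_def using s
    by (intro Bochner_Integration.integral_nonneg) (simp add: indicator_def)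
  ultimately have "(LINT y:face_box a b i|face_measure i. \<phi> y) \<le> (LINT x:box a b|lebesgue. \<psi> x)"
    by simp
  thus ?thesis unfolding \<phi>_def \<psi>_def using int_a int_b int_v int_p by simp
qed

lemma hbar_lo_le: "hbar_lo a b \<le> min \<bar>a$i\<bar> \<bar>b$i\<bar>"
  unfolding hbar_lo_def by (rule Min_le) auto

lemma hbar_hi_ge: "max \<bar>a$i\<bar> \<bar>b$i\<bar> \<le> hbar_hi a b"
  unfolding hbar_hi_def by (rule Max_ge) auto

lemma hbar_lo_pos:
  assumes "0 \<in> box a b"
  shows "0 < hbar_lo a b"
proof -
  have "hbar_lo a b \<in> range (\<lambda>i. min \<bar>a$i\<bar> \<bar>b$i\<bar>)"
    unfolding hbar_lo_def by (rule Min_in) auto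
  then obtain j where "hbar_lo a b = min \<bar>a$j\<bar> \<bar>b$j\<bar>" by auto
  moreover have "a$j < 0" "0 < b$j" using assms by (auto simp: mem_box_cart)
  ultimately show ?thesis by simp
qed

lemma h1_norm_nonneg: "0 \<le> h1_norm \<Omega> f F"
  unfolding h1_norm_def set_lebesgue_integral_def
  by (intro real_sqrt_ge_zero add_nonneg_nonneg Bochner_Integration.integral_nonneg)
    (auto simp: indicator_def intro: sum_nonneg)

lemma h1_norm_eq_sum:
  assumes "\<And>i. set_integrable lebesgue \<Omega> (\<lambda>x. (F i x)^2)"
  shows "h1_norm \<Omega> f F
    = sqrt ((\<Sum>i\<in>UNIV. LINT x:\<Omega>|lebesgue. (F i x)^2) + (LINT x:\<Omega>|lebesgue. (f x)^2))"
proof -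
  have "(LINT x:\<Omega>|lebesgue. (\<Sum>i\<in>UNIV. (F i x)^2)) = (\<Sum>i\<in>UNIV. LINT x:\<Omega>|lebesgue. (F i x)^2)"
    using assms unfolding set_lebesgue_integral_def set_integrable_def scaleR_sum_right
    by (rule Bochner_Integration.integral_sum)
  thus ?thesis unfolding h1_norm_def by simp
qed

lemma bdry_sq_norm_smooth_le:
  fixes a b :: "real^'n::finite"
  assumes box: "0 \<in> box a b" and v: "smooth_fun v"
  shows "hbar_lo a b * bdry_sq_norm a b v
    \<le> (real CARD('n) + (hbar_hi a b)^2) * (h1_norm (box a b) v (\<lambda>i. partial i v))^2"
proof -
  let ?L = "hbar_lo a b" and ?H = "hbar_hi a b" and ?d = "real CARD('n)"
  define P where "P = (LINT x:box a b|lebesgue. (v x)^2)"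
  define Q where "Q i = (LINT x:box a b|lebesgue. (partial i v x)^2)" for i
  define A where "A i = (LINT y:face_box a b i|face_measure i. (v (face_pt i (a$i) y))^2)" for i
  define B where "B i = (LINT y:face_box a b i|face_measure i. (v (face_pt i (b$i) y))^2)" for i
  have ab: "a$i < 0" "0 < b$i" for i using box by (auto simp: mem_box_cart)
  have "0 < ?H" using hbar_hi_ge[of a undefined b] ab[of undefined] by auto
  \<comment> \<open>Young weight \<open>s = hbar_hi\<^sup>2 / d\<close>: then \<open>d (1 + s) = d + hbar_hi\<^sup>2\<close> and \<open>hbar_hi\<^sup>2 / s = d\<close>.\<close>
  have "?L * (A i + B i) \<le> (1 + ?H^2 / ?d) * P + ?d * Q i" for i
  proof -
    have "?L * (A i + B i) \<le> (1 + ?H^2 / ?d) * P + ?H^2 / (?H^2 / ?d) * Q i"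
      unfolding A_def B_def P_def Q_def
      using ab[of i] hbar_lo_le[of a b i] hbar_hi_ge[of a i b] hbar_lo_pos[OF box] \<open>0 < ?H\<close>
      by (intro opposite_faces_set_integral_le v) (auto simp: abs_of_neg abs_of_pos less_imp_le)
    thus ?thesis using \<open>0 < ?H\<close> by simp
  qed
  hence "?L * bdry_sq_norm a b v \<le> (\<Sum>i\<in>UNIV. (1 + ?H^2 / ?d) * P + ?d * Q i)"
    unfolding bdry_sq_norm_def A_def B_def by (simp add: sum_distrib_left sum_mono)
  also have "\<dots> = ?d * ((1 + ?H^2 / ?d) * P) + ?d * (\<Sum>i\<in>UNIV. Q i)"
    by (simp add: sum.distrib sum_distrib_left)
  also have "\<dots> = (?d + ?H^2) * P + ?d * (\<Sum>i\<in>UNIV. Q i)"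
    by (simp add: field_simps)
  also have "\<dots> \<le> (?d + ?H^2) * ((\<Sum>i\<in>UNIV. Q i) + P)"
    using sum_nonneg[of UNIV Q] unfolding Q_def by (simp add: set_integral_sq_nonneg algebra_simps)
  also have "(\<Sum>i\<in>UNIV. Q i) + P = (h1_norm (box a b) v (\<lambda>i. partial i v))^2"
    unfolding P_def Q_def
    by (subst h1_norm_eq_sum)
      (auto intro!: set_integrable_box_continuous continuous_intros smooth_fun_continuous_partial[OF v]
        simp: set_integral_sq_nonneg sum_nonneg)
  finally show ?thesis .
qed

lemma trace_ineq_smooth:
  fixes a b :: "real^'n::finite"
  assumes box: "0 \<in> box a b" and v: "smooth_fun v"
  shows "sqrt (bdry_sq_norm a b v)
    \<le> sqrt ((real CARD('n) + (hbar_hi a b)^2) / hbar_lo a b) * h1_norm (box a b) v (\<lambda>i. partial i v)"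
proof -
  let ?K = "real CARD('n) + (hbar_hi a b)^2" and ?h = "h1_norm (box a b) v (\<lambda>i. partial i v)"
  have "bdry_sq_norm a b v \<le> ?K / hbar_lo a b * ?h^2"
    using bdry_sq_norm_smooth_le[OF box v] hbar_lo_pos[OF box] by (simp add: field_simps)
  hence "sqrt (bdry_sq_norm a b v) \<le> sqrt (?K / hbar_lo a b) * \<bar>?h\<bar>"
    by (metis real_sqrt_abs real_sqrt_le_mono real_sqrt_mult)
  thus ?thesis by (simp add: abs_of_nonneg h1_norm_nonneg)
qed

section \<open>Passing to the trace\<close>

lemma L2_on_diff:
  assumes "\<Omega> \<in> sets lebesgue" "L2_on \<Omega> f" "L2_on \<Omega> g"
  shows "L2_on \<Omega> (\<lambda>x. f x - g x)"
  using assms set_integral_sq_le_weighted(1)[OF assms(1)] unfolding L2_on_def by auto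

lemma L2_on_box_continuous:
  fixes g :: "real^'n::finite \<Rightarrow> real"
  assumes "continuous_on UNIV g"
  shows "L2_on (box a b) g"
  unfolding L2_on_def using assms
  by (auto intro!: continuous_imp_measurable_on_sets_lebesgue set_integrable_box_continuous
      continuous_intros intro: continuous_on_subset)

lemma h1_norm_triangle:
  assumes \<Omega>: "\<Omega> \<in> sets lebesgue"
    and f: "L2_on \<Omega> f" "\<And>i. L2_on \<Omega> (F i)" and g: "L2_on \<Omega> g" "\<And>i. L2_on \<Omega> (G i)"
  shows "h1_norm \<Omega> f F \<le> h1_norm \<Omega> g G + h1_norm \<Omega> (\<lambda>x. f x - g x) (\<lambda>i x. F i x - G i x)"
proof -
  have "L2_on \<Omega> (\<lambda>x. F i x - G i x)" for i by (rule L2_on_diff[OF \<Omega> f(2) g(2)])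
  hence sq_integrable: "set_integrable lebesgue \<Omega> (\<lambda>x. (F i x)^2)"
    "set_integrable lebesgue \<Omega> (\<lambda>x. (G i x)^2)"
    "set_integrable lebesgue \<Omega> (\<lambda>x. (F i x - G i x)^2)" for i
    using f g unfolding L2_on_def by auto
  note weighted = set_integral_sq_le_weighted(2)[OF \<Omega>]
  show ?thesis
    unfolding h1_norm_eq_sum[OF sq_integrable(1)] h1_norm_eq_sum[OF sq_integrable(2)]
      h1_norm_eq_sum[OF sq_integrable(3)]
  proof (rule sqrt_le_add_sqrt_if_weighted_bound)
    fix e :: real
    assume "e > 0"
    have "(\<Sum>i\<in>UNIV. LINT x:\<Omega>|lebesgue. (F i x)^2)
        \<le> (\<Sum>i\<in>UNIV. (1 + e) * (LINT x:\<Omega>|lebesgue. (G i x)^2)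
                      + (1 + 1/e) * (LINT x:\<Omega>|lebesgue. (F i x - G i x)^2))"
      using f g \<open>e > 0\<close> unfolding L2_on_def by (intro sum_mono weighted) auto
    moreover have "(LINT x:\<Omega>|lebesgue. (f x)^2)
        \<le> (1 + e) * (LINT x:\<Omega>|lebesgue. (g x)^2) + (1 + 1/e) * (LINT x:\<Omega>|lebesgue. (f x - g x)^2)"
      using f g \<open>e > 0\<close> unfolding L2_on_def by (intro weighted) auto
    ultimately show "(\<Sum>i\<in>UNIV. LINT x:\<Omega>|lebesgue. (F i x)^2) + (LINT x:\<Omega>|lebesgue. (f x)^2)
        \<le> (1 + e) * ((\<Sum>i\<in>UNIV. LINT x:\<Omega>|lebesgue. (G i x)^2) + (LINT x:\<Omega>|lebesgue. (g x)^2))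
          + (1 + 1/e) * ((\<Sum>i\<in>UNIV. LINT x:\<Omega>|lebesgue. (F i x - G i x)^2)
                         + (LINT x:\<Omega>|lebesgue. (f x - g x)^2))"
      by (simp add: sum.distrib sum_distrib_left algebra_simps)
  qed (simp_all add: add_nonneg_nonneg sum_nonneg set_integral_sq_nonneg)
qed

lemma bdry_L2_continuous:
  fixes g :: "real^'n::finite \<Rightarrow> real"
  assumes "continuous_on UNIV g" "\<And>i. a$i \<le> b$i"
  shows "bdry_L2 a b g"
proof -
  have [measurable]: "g \<in> borel_measurable borel" using assms(1) by (rule borel_measurable_continuous_onI)
  show ?thesis
    unfolding bdry_L2_def using assms
    by (auto intro!: set_integrable_face_continuous continuous_intros)
qed

lemma bdry_sq_norm_diff_commute:
  "bdry_sq_norm a b (\<lambda>x. f x - g x) = bdry_sq_norm a b (\<lambda>x. g x - f x)"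
  by (simp add: bdry_sq_norm_def power2_commute)

lemma bdry_sq_norm_triangle:
  fixes a b :: "real^'n::finite"
  assumes f: "bdry_L2 a b f" and g: "bdry_L2 a b g"
  shows "sqrt (bdry_sq_norm a b f) \<le> sqrt (bdry_sq_norm a b g) + sqrt (bdry_sq_norm a b (\<lambda>x. f x - g x))"
proof -
  define N where "N h i c = (LINT y:face_box a b i|face_measure i. (h (face_pt i c y))^2)"
    for h :: "real^'n \<Rightarrow> real" and i c
  have bdry_eq: "bdry_sq_norm a b h = (\<Sum>i\<in>UNIV. N h i (a$i) + N h i (b$i))" for h
    unfolding bdry_sq_norm_def N_def ..
  show ?thesis
    unfolding bdry_eq
  proof (rule sqrt_le_add_sqrt_if_weighted_bound)
    fix e :: real
    assume "e > 0"
    have face: "N f i c \<le> (1 + e) * N g i c + (1 + 1/e) * N (\<lambda>x. f x - g x) i c"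
      if "c \<in> {a$i, b$i}" for i c
      using f g that \<open>e > 0\<close> unfolding bdry_L2_def N_def
      by (intro set_integral_sq_le_weighted(2) sets_face_box measurable_restrict_space1) auto
    show "(\<Sum>i\<in>UNIV. N f i (a$i) + N f i (b$i))
      \<le> (1 + e) * (\<Sum>i\<in>UNIV. N g i (a$i) + N g i (b$i))
        + (1 + 1/e) * (\<Sum>i\<in>UNIV. N (\<lambda>x. f x - g x) i (a$i) + N (\<lambda>x. f x - g x) i (b$i))"
      unfolding sum_distrib_left sum.distrib[symmetric]
    proof (rule sum_mono)
      fix i
      show "N f i (a$i) + N f i (b$i)
        \<le> (1 + e) * (N g i (a$i) + N g i (b$i))
          + (1 + 1/e) * (N (\<lambda>x. f x - g x) i (a$i) + N (\<lambda>x. f x - g x) i (b$i))"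
        using face[of "a$i" i] face[of "b$i" i] by (simp add: algebra_simps)
    qed
  qed (auto simp: N_def set_integral_sq_nonneg intro!: sum_nonneg add_nonneg_nonneg)
qed

lemma bdry_norm_le_smooth_approx:
  fixes a b :: "real^'n::finite"
  assumes box: "0 \<in> box a b" and u: "L2_on (box a b) u" "\<And>i. L2_on (box a b) (G i)"
    and tr: "bdry_L2 a b tr" and v: "smooth_fun v"
  shows "sqrt (bdry_sq_norm a b tr)
    \<le> sqrt ((real CARD('n) + (hbar_hi a b)^2) / hbar_lo a b)
        * (h1_norm (box a b) u G + h1_norm (box a b) (\<lambda>x. v x - u x) (\<lambda>i x. partial i v x - G i x))
      + sqrt (bdry_sq_norm a b (\<lambda>x. v x - tr x))"
proof -
  let ?C = "sqrt ((real CARD('n) + (hbar_hi a b)^2) / hbar_lo a b)"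
  have "0 \<le> ?C" using hbar_lo_pos[OF box] by simp
  have "a$i \<le> b$i" for i
    using box unfolding mem_box_cart by (metis less_imp_le less_trans zero_index)
  hence "sqrt (bdry_sq_norm a b tr)
      \<le> sqrt (bdry_sq_norm a b v) + sqrt (bdry_sq_norm a b (\<lambda>x. tr x - v x))"
    by (intro bdry_sq_norm_triangle tr bdry_L2_continuous smooth_fun_continuous v)
  also have "bdry_sq_norm a b (\<lambda>x. tr x - v x) = bdry_sq_norm a b (\<lambda>x. v x - tr x)"
    by (rule bdry_sq_norm_diff_commute)
  also have "sqrt (bdry_sq_norm a b v) \<le> ?C * h1_norm (box a b) v (\<lambda>i. partial i v)"
    by (rule trace_ineq_smooth[OF box v])
  also have "h1_norm (box a b) v (\<lambda>i. partial i v)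
      \<le> h1_norm (box a b) u G + h1_norm (box a b) (\<lambda>x. v x - u x) (\<lambda>i x. partial i v x - G i x)"
    by (intro h1_norm_triangle u L2_on_box_continuous smooth_fun_continuous
        smooth_fun_continuous_partial v) simp
  finally show ?thesis using \<open>0 \<le> ?C\<close> by (simp add: mult_left_mono)
qed

theorem lemma5p1:
  fixes a b :: "real^'n::finite"
    and u :: "real^'n \<Rightarrow> real"
    and G :: "'n \<Rightarrow> real^'n \<Rightarrow> real"
    and tr :: "real^'n \<Rightarrow> real"
  assumes "0 \<in> box a b"
    and "H1 (box a b) u G"
    and "is_trace a b u G tr"
  shows "sqrt (bdry_sq_norm a b tr)
           \<le> sqrt ((real CARD('n) + (hbar_hi a b)^2) / hbar_lo a b) * h1_norm (box a b) u G"
proof -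
  let ?C = "sqrt ((real CARD('n) + (hbar_hi a b)^2) / hbar_lo a b)"
  obtain v where tr: "bdry_L2 a b tr" and smooth: "\<And>n. smooth_fun (v n)"
    and h1_lim: "(\<lambda>n. h1_norm (box a b) (\<lambda>x. v n x - u x) (\<lambda>i x. partial i (v n) x - G i x)) \<longlonglongrightarrow> 0"
    and bdry_lim: "(\<lambda>n. sqrt (bdry_sq_norm a b (\<lambda>x. v n x - tr x))) \<longlonglongrightarrow> 0"
    using assms(3) unfolding is_trace_def by blast
  have u: "L2_on (box a b) u" "\<And>i. L2_on (box a b) (G i)"
    using assms(2) unfolding H1_def weak_grad_def by auto
  have "(\<lambda>n. ?C * (h1_norm (box a b) u G + h1_norm (box a b) (\<lambda>x. v n x - u x) (\<lambda>i x. partial i (v n) x - G i x))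
        + sqrt (bdry_sq_norm a b (\<lambda>x. v n x - tr x))) \<longlonglongrightarrow> ?C * (h1_norm (box a b) u G + 0) + 0"
    by (intro tendsto_intros h1_lim bdry_lim)
  thus ?thesis
    using bdry_norm_le_smooth_approx[OF assms(1) u tr smooth] by (intro LIMSEQ_le_const) auto
qed

end
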